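(* Let $\mathbb{I}\subseteq\mathbb{Z}$ be a discrete interval and $A$ a band operator on $\ell^2(\mathbb{I})$ with band-width $w$. Then for every $N\in\mathbb{N}$, \[ \nu_N(A)=\inf\{\nu_{j..j+N-1}(A):j..j+N-1\subseteq\mathbb{I}\}=\inf\{\nu(C):C\in\mathcal{C}_N(A)\}. \]
   Context: $a..b:=\{n\in\mathbb{Z}:a\le n\le b\}$; a discrete interval is a set of consecutive integers (finite or infinite). A band operator with band-width $w$ has matrix entries $A_{ij}=0$ for $|i-j|>w$. $\nu(T):=\inf\{\|Tx\|:\|x\|=1\}$ (for a matrix $C$, as an operator between finite-dimensional $\ell^2$ spaces); $\nu_N(A):=\inf\{\|Ax\|:\|x\|=1,\operatorname{diam}(\operatorname{supp}x)<N\}$; $\nu_{J}(A):=\inf\{\|Ax\|:\operatorname{supp}x\subseteq J,\|x\|=1\}$. $\mathcal{C}_N(A)$ is the set of $(N+2w)\times N$ matrices $C=(C_{ij})_{i\in1-w..N+w,\,j\in1..N}$ with $C_{ij}=A_{k+i,k+j}$ for some $k$ with $k+1..k+N\subseteq\mathbb{I}$, where $C_{ij}:=0$ if $A_{k+i,k+j}$ is undefined. *)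

theory Defs
  imports "HOL-Analysis.Analysis"
begin

definition discrete_interval :: "int set \<Rightarrow> bool" where
  "discrete_interval I \<longleftrightarrow> (\<forall>a\<in>I. \<forall>c\<in>I. \<forall>b. a \<le> b \<and> b \<le> c \<longrightarrow> b \<in> I)"

text \<open>Matrix of an operator on l2(I), given by its entries a i j for i, j in I.
  Band operator with band-width w: bounded entries and a i j = 0 for |i-j| > w
  (for band matrices, boundedness of the operator is equivalent to boundedness of the entries).\<close>
definition band_operator :: "int set \<Rightarrow> (int \<Rightarrow> int \<Rightarrow> complex) \<Rightarrow> nat \<Rightarrow> bool" where
  "band_operator I a w \<longleftrightarrow>
     (\<exists>M. \<forall>i\<in>I. \<forall>j\<in>I. cmod (a i j) \<le> M) \<and>
     (\<forall>i\<in>I. \<forall>j\<in>I. \<bar>i - j\<bar> > int w \<longrightarrow> a i j = 0)"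

definition supp :: "(int \<Rightarrow> complex) \<Rightarrow> int set" where
  "supp x = {i. x i \<noteq> 0}"

text \<open>l2 norm of a finitely supported vector (only applied to such vectors).\<close>
definition l2norm :: "(int \<Rightarrow> complex) \<Rightarrow> real" where
  "l2norm x = sqrt (\<Sum>i\<in>supp x. (cmod (x i))\<^sup>2)"

definition op_apply :: "int set \<Rightarrow> (int \<Rightarrow> int \<Rightarrow> complex) \<Rightarrow> (int \<Rightarrow> complex) \<Rightarrow> (int \<Rightarrow> complex)" where
  "op_apply I a x = (\<lambda>i. if i \<in> I then (\<Sum>j\<in>supp x \<inter> I. a i j * x j) else 0)"

definition nu_N :: "int set \<Rightarrow> (int \<Rightarrow> int \<Rightarrow> complex) \<Rightarrow> nat \<Rightarrow> real" where
  "nu_N I a N = Inf {l2norm (op_apply I a x) | x.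
      supp x \<subseteq> I \<and> l2norm x = 1 \<and> (\<forall>i\<in>supp x. \<forall>j\<in>supp x. \<bar>i - j\<bar> < int N)}"

definition nu_J :: "int set \<Rightarrow> (int \<Rightarrow> int \<Rightarrow> complex) \<Rightarrow> int set \<Rightarrow> real" where
  "nu_J I a J = Inf {l2norm (op_apply I a x) | x. supp x \<subseteq> J \<and> l2norm x = 1}"

definition cut_matrix :: "int set \<Rightarrow> (int \<Rightarrow> int \<Rightarrow> complex) \<Rightarrow> nat \<Rightarrow> nat \<Rightarrow> int \<Rightarrow> (int \<Rightarrow> int \<Rightarrow> complex)" where
  "cut_matrix I a w N k = (\<lambda>i j.
     if i \<in> {1 - int w .. int N + int w} \<and> j \<in> {1 .. int N} \<and> k + i \<in> I \<and> k + j \<in> I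
     then a (k + i) (k + j) else 0)"

definition C_N :: "int set \<Rightarrow> (int \<Rightarrow> int \<Rightarrow> complex) \<Rightarrow> nat \<Rightarrow> nat \<Rightarrow> (int \<Rightarrow> int \<Rightarrow> complex) set" where
  "C_N I a w N = {cut_matrix I a w N k | k. {k + 1 .. k + int N} \<subseteq> I}"

definition nu_mat :: "nat \<Rightarrow> nat \<Rightarrow> (int \<Rightarrow> int \<Rightarrow> complex) \<Rightarrow> real" where
  "nu_mat w N C = Inf {sqrt (\<Sum>i\<in>{1 - int w .. int N + int w}. (cmod (\<Sum>j\<in>{1 .. int N}. C i j * y j))\<^sup>2) | y.
      (\<Sum>j\<in>{1 .. int N}. (cmod (y j))\<^sup>2) = 1}"

end

theory Submission
  imports Defs
begin

(* A finitely supported vector of diameter less than N fits, inside the interval I, into a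
   window k+1..k+N of N consecutive indices of I; hence nu_N(A) is the infimum of
   nu_J(A) over such windows J.  For x supported in the window, the band structure confines
   Ax to k+1-w..k+N+w, where it is exactly C y for the cut matrix C at offset k and the
   shifted vector y j = x (k + j).  As x and y have the same norm, nu_J(A) = nu(C). *)

lemma cInf_UNION:
  fixes B :: "'a \<Rightarrow> 'b::conditionally_complete_lattice set"
  assumes "A \<noteq> {}" "\<And>x. x \<in> A \<Longrightarrow> B x \<noteq> {}" "bdd_below (\<Union>x\<in>A. B x)"
  shows "Inf (\<Union>x\<in>A. B x) = Inf ((\<lambda>x. Inf (B x)) ` A)"
  using cINF_UNION[of A B id] assms by simp

lemma sum_atLeastAtMost_int_shift:
  fixes f :: "int \<Rightarrow> 'b::comm_monoid_add"
  shows "(\<Sum>i\<in>{k + p..k + q}. f i) = (\<Sum>j\<in>{p..q}. f (k + j))"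
  by (rule sum.reindex_bij_witness[where i="\<lambda>i. k + i" and j="\<lambda>i. i - k"]) auto

lemma discrete_interval_atLeastAtMost_subset:
  assumes "discrete_interval I" "p \<in> I" "q \<in> I"
  shows "{p..q} \<subseteq> I"
  using assms unfolding discrete_interval_def by (meson atLeastAtMost_iff subsetI)

lemma discrete_interval_window_cover:
  assumes I: "discrete_interval I" and j0: "{j0 .. j0 + int N - 1} \<subseteq> I"
    and F: "finite F" "F \<noteq> {}" "F \<subseteq> I"
    and diam: "\<forall>i\<in>F. \<forall>j\<in>F. \<bar>i - j\<bar> < int N"
  obtains j where "{j .. j + int N - 1} \<subseteq> I" "F \<subseteq> {j .. j + int N - 1}"
proof -
  define m M where "m = Min F" and "M = Max F"
  have "m \<in> F" "M \<in> F"
    using F by (simp_all add: m_def M_def)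
  then have "\<bar>M - m\<bar> < int N"
    using diam by blast
  then have diam_F: "M - m < int N"
    by simp
  have F_bounds: "F \<subseteq> {m..M}"
    using Min_le[OF F(1)] Max_ge[OF F(1)] by (auto simp: m_def M_def)
  have "m \<le> M"
    using F_bounds \<open>m \<in> F\<close> by auto
  then have "j0 \<in> I" "j0 + int N - 1 \<in> I" "m \<in> I" "M \<in> I"
    using j0 F(3) \<open>m \<in> F\<close> \<open>M \<in> F\<close> diam_F by auto
  then have hull: "{min m j0 .. max M (j0 + int N - 1)} \<subseteq> I"
    by (intro discrete_interval_atLeastAtMost_subset[OF I]) (simp_all add: min_def max_def)
  \<comment> \<open>slide the window right from min m j0 just until it reaches M; it then still starts at or before m\<close>
  define j where "j = max (M - int N + 1) (min m j0)"
  have "{j .. j + int N - 1} \<subseteq> {min m j0 .. max M (j0 + int N - 1)}"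
    using \<open>m \<le> M\<close> diam_F by (auto simp: j_def)
  moreover have "{m..M} \<subseteq> {j .. j + int N - 1}"
    using diam_F by (auto simp: j_def)
  ultimately have "{j .. j + int N - 1} \<subseteq> I" "F \<subseteq> {j .. j + int N - 1}"
    using hull F_bounds by blast+
  then show ?thesis
    using that by blast
qed

lemma l2norm_eq_sum_superset:
  assumes "finite S" "supp x \<subseteq> S"
  shows "l2norm x = sqrt (\<Sum>i\<in>S. (cmod (x i))\<^sup>2)"
  unfolding l2norm_def
  using assms by (intro arg_cong[where f=sqrt] sum.mono_neutral_left) (auto simp: supp_def)

lemma l2norm_nonneg: "l2norm x \<ge> 0"
  unfolding l2norm_def by (simp add: sum_nonneg)

lemma finite_nonempty_supp_if_l2norm_eq_1:
  assumes "l2norm x = 1"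
  shows "finite (supp x)" "supp x \<noteq> {}"
  using assms unfolding l2norm_def by (auto intro: ccontr)

lemma l2norm_unit_vector: "l2norm (\<lambda>i. if i = j then 1 else 0) = 1"
proof -
  have "supp (\<lambda>i. if i = j then 1 else 0) = {j}"
    by (auto simp: supp_def)
  then show ?thesis
    by (simp add: l2norm_def)
qed

lemma op_apply_eq_sum_superset:
  assumes "finite J" "supp x \<subseteq> J" "J \<subseteq> I"
  shows "op_apply I a x i = (if i \<in> I then \<Sum>j\<in>J. a i j * x j else 0)"
  unfolding op_apply_def
  using assms by (auto intro!: sum.mono_neutral_left simp: supp_def)

lemma supp_op_apply_band:
  assumes "band_operator I a w" "supp x \<subseteq> {p..q}"
  shows "supp (op_apply I a x) \<subseteq> {p - int w .. q + int w}"
proof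
  fix i
  assume "i \<in> supp (op_apply I a x)"
  then have "i \<in> I" and "(\<Sum>j\<in>supp x \<inter> I. a i j * x j) \<noteq> 0"
    by (auto simp: supp_def op_apply_def split: if_splits)
  then obtain j where j: "j \<in> supp x \<inter> I" "a i j \<noteq> 0"
    by (auto elim: sum.not_neutral_contains_not_neutral)
  have "\<not> \<bar>i - j\<bar> > int w"
    using assms(1) \<open>i \<in> I\<close> j unfolding band_operator_def by blast
  moreover have "j \<in> {p..q}"
    using assms(2) j(1) by blast
  ultimately show "i \<in> {p - int w .. q + int w}"
    by auto
qed

definition mat_image_norm :: "nat \<Rightarrow> nat \<Rightarrow> (int \<Rightarrow> int \<Rightarrow> complex) \<Rightarrow> (int \<Rightarrow> complex) \<Rightarrow> real" where
  "mat_image_norm w N C y =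
     sqrt (\<Sum>i\<in>{1 - int w .. int N + int w}. (cmod (\<Sum>j\<in>{1 .. int N}. C i j * y j))\<^sup>2)"

lemma nu_mat_eq_Inf_mat_image_norm:
  "nu_mat w N C = Inf {mat_image_norm w N C y | y. (\<Sum>j\<in>{1 .. int N}. (cmod (y j))\<^sup>2) = 1}"
  by (simp add: nu_mat_def mat_image_norm_def)

lemma mat_image_norm_cong:
  assumes "\<And>j. j \<in> {1 .. int N} \<Longrightarrow> y j = z j"
  shows "mat_image_norm w N C y = mat_image_norm w N C z"
  using assms by (simp add: mat_image_norm_def)

definition unit_image_norms :: "int set \<Rightarrow> (int \<Rightarrow> int \<Rightarrow> complex) \<Rightarrow> int set \<Rightarrow> real set" where
  "unit_image_norms I a J = {l2norm (op_apply I a x) | x. supp x \<subseteq> J \<and> l2norm x = 1}"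

lemma nu_J_eq_Inf_unit_image_norms: "nu_J I a J = Inf (unit_image_norms I a J)"
  by (simp add: nu_J_def unit_image_norms_def)

lemma op_apply_window_eq_cut_matrix:
  assumes W: "{k + 1 .. k + int N} \<subseteq> I" and x: "supp x \<subseteq> {k + 1 .. k + int N}"
    and i: "i \<in> {1 - int w .. int N + int w}"
  shows "op_apply I a x (k + i) = (\<Sum>j\<in>{1 .. int N}. cut_matrix I a w N k i j * x (k + j))"
proof -
  have "op_apply I a x (k + i) =
      (if k + i \<in> I then \<Sum>j\<in>{k + 1 .. k + int N}. a (k + i) j * x j else 0)"
    using op_apply_eq_sum_superset[OF _ x W] by simp
  also have "\<dots> = (if k + i \<in> I then \<Sum>j\<in>{1 .. int N}. a (k + i) (k + j) * x (k + j) else 0)"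
    by (simp only: sum_atLeastAtMost_int_shift)
  also have "\<dots> = (\<Sum>j\<in>{1 .. int N}. cut_matrix I a w N k i j * x (k + j))"
    using W i by (auto simp: cut_matrix_def subset_iff intro!: sum.cong)
  finally show ?thesis .
qed

lemma l2norm_op_apply_window:
  assumes band: "band_operator I a w"
    and W: "{k + 1 .. k + int N} \<subseteq> I" and x: "supp x \<subseteq> {k + 1 .. k + int N}"
  shows "l2norm (op_apply I a x) = mat_image_norm w N (cut_matrix I a w N k) (\<lambda>j. x (k + j))"
proof -
  have "supp (op_apply I a x) \<subseteq> {k + (1 - int w) .. k + (int N + int w)}"
    using supp_op_apply_band[OF band x] by (simp add: algebra_simps)
  then have "l2norm (op_apply I a x) =
      sqrt (\<Sum>i\<in>{k + (1 - int w) .. k + (int N + int w)}. (cmod (op_apply I a x i))\<^sup>2)"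
    by (intro l2norm_eq_sum_superset) simp_all
  also have "\<dots> = sqrt (\<Sum>i\<in>{1 - int w .. int N + int w}. (cmod (op_apply I a x (k + i)))\<^sup>2)"
    by (simp only: sum_atLeastAtMost_int_shift)
  also have "\<dots> = mat_image_norm w N (cut_matrix I a w N k) (\<lambda>j. x (k + j))"
    using op_apply_window_eq_cut_matrix[OF W x] by (simp add: mat_image_norm_def)
  finally show ?thesis .
qed

lemma l2norm_window_eq_1_iff:
  assumes "supp x \<subseteq> {k + 1 .. k + int N}"
  shows "l2norm x = 1 \<longleftrightarrow> (\<Sum>j\<in>{1 .. int N}. (cmod (x (k + j)))\<^sup>2) = 1"
  using l2norm_eq_sum_superset[OF _ assms] by (simp add: sum_atLeastAtMost_int_shift)

lemma nu_J_window_eq_nu_mat: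
  assumes band: "band_operator I a w" and W: "{k + 1 .. k + int N} \<subseteq> I"
  shows "nu_J I a {k + 1 .. k + int N} = nu_mat w N (cut_matrix I a w N k)"
proof -
  let ?W = "{k + 1 .. k + int N}" and ?C = "cut_matrix I a w N k"
  have "unit_image_norms I a ?W =
      {mat_image_norm w N ?C y | y. (\<Sum>j\<in>{1 .. int N}. (cmod (y j))\<^sup>2) = 1}"
  proof (intro equalityI subsetI)
    fix v
    assume "v \<in> unit_image_norms I a ?W"
    then obtain x where "supp x \<subseteq> ?W" "l2norm x = 1" "v = l2norm (op_apply I a x)"
      by (auto simp: unit_image_norms_def)
    then show "v \<in> {mat_image_norm w N ?C y | y. (\<Sum>j\<in>{1 .. int N}. (cmod (y j))\<^sup>2) = 1}"
      using l2norm_window_eq_1_iff l2norm_op_apply_window[OF band W] by blast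
  next
    fix v
    assume "v \<in> {mat_image_norm w N ?C y | y. (\<Sum>j\<in>{1 .. int N}. (cmod (y j))\<^sup>2) = 1}"
    then obtain y where y: "(\<Sum>j\<in>{1 .. int N}. (cmod (y j))\<^sup>2) = 1" "v = mat_image_norm w N ?C y"
      by blast
    define x where "x i = (if i \<in> ?W then y (i - k) else 0)" for i
    have x: "supp x \<subseteq> ?W"
      by (auto simp: x_def supp_def)
    have x_shift: "x (k + j) = y j" if "j \<in> {1 .. int N}" for j
      using that by (simp add: x_def)
    have "l2norm x = 1"
      using l2norm_window_eq_1_iff[OF x] x_shift y(1) by simp
    moreover have "v = l2norm (op_apply I a x)"
      using l2norm_op_apply_window[OF band W x] mat_image_norm_cong[of N "\<lambda>j. x (k + j)" y] x_shift y(2)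
      by simp
    ultimately show "v \<in> unit_image_norms I a ?W"
      using x by (auto simp: unit_image_norms_def)
  qed
  then show ?thesis
    by (simp add: nu_J_eq_Inf_unit_image_norms nu_mat_eq_Inf_mat_image_norm)
qed

lemma unit_image_norms_nonneg: "v \<in> unit_image_norms I a J \<Longrightarrow> v \<ge> 0"
  by (auto simp: unit_image_norms_def l2norm_nonneg)

lemma unit_image_norms_nonempty:
  assumes "j \<in> J"
  shows "unit_image_norms I a J \<noteq> {}"
proof -
  let ?e = "\<lambda>i. if i = j then 1 else 0"
  have "supp ?e \<subseteq> J"
    using assms by (auto simp: supp_def)
  then have "l2norm (op_apply I a ?e) \<in> unit_image_norms I a J"
    using l2norm_unit_vector unfolding unit_image_norms_def by blast
  then show ?thesis
    by blast
qed

lemma nu_N_set_eq_UNION_windows: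
  assumes I: "discrete_interval I" and j0: "{j0 .. j0 + int N - 1} \<subseteq> I"
  shows "{l2norm (op_apply I a x) | x.
            supp x \<subseteq> I \<and> l2norm x = 1 \<and> (\<forall>i\<in>supp x. \<forall>j\<in>supp x. \<bar>i - j\<bar> < int N)}
       = (\<Union>j\<in>{j. {j .. j + int N - 1} \<subseteq> I}. unit_image_norms I a {j .. j + int N - 1})"
    (is "?lhs = ?rhs")
proof (intro equalityI subsetI)
  fix v
  assume "v \<in> ?lhs"
  then obtain x where x: "supp x \<subseteq> I" "l2norm x = 1"
      "\<forall>i\<in>supp x. \<forall>j\<in>supp x. \<bar>i - j\<bar> < int N" "v = l2norm (op_apply I a x)"
    by blast
  obtain j where "{j .. j + int N - 1} \<subseteq> I" "supp x \<subseteq> {j .. j + int N - 1}"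
    using discrete_interval_window_cover[OF I j0 finite_nonempty_supp_if_l2norm_eq_1[OF x(2)] x(1,3)] .
  then show "v \<in> ?rhs"
    using x(2,4) by (auto simp: unit_image_norms_def)
next
  fix v
  assume "v \<in> ?rhs"
  then obtain j x where x: "{j .. j + int N - 1} \<subseteq> I" "supp x \<subseteq> {j .. j + int N - 1}"
      "l2norm x = 1" "v = l2norm (op_apply I a x)"
    by (auto simp: unit_image_norms_def)
  have "\<bar>i - i'\<bar> < int N" if "i \<in> supp x" "i' \<in> supp x" for i i'
  proof -
    have "i \<in> {j .. j + int N - 1}" "i' \<in> {j .. j + int N - 1}"
      using x(2) that by auto
    then show ?thesis
      by auto
  qed
  with x show "v \<in> ?lhs"
    by blast
qed

lemma nu_N_eq_Inf_nu_J_windows: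
  assumes I: "discrete_interval I" and "N \<ge> 1" and "\<exists>j. {j .. j + int N - 1} \<subseteq> I"
  shows "nu_N I a N = Inf {nu_J I a {j .. j + int N - 1} | j. {j .. j + int N - 1} \<subseteq> I}"
proof -
  obtain j0 where j0: "{j0 .. j0 + int N - 1} \<subseteq> I"
    using assms(3) by blast
  let ?windows = "{j. {j .. j + int N - 1} \<subseteq> I}"
  have "nu_N I a N = Inf (\<Union>j\<in>?windows. unit_image_norms I a {j .. j + int N - 1})"
    unfolding nu_N_def nu_N_set_eq_UNION_windows[OF I j0] ..
  also have "\<dots> = Inf ((\<lambda>j. Inf (unit_image_norms I a {j .. j + int N - 1})) ` ?windows)"
  proof (rule cInf_UNION)
    show "?windows \<noteq> {}"
      using j0 by blast
    show "unit_image_norms I a {j .. j + int N - 1} \<noteq> {}" for j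
      using \<open>N \<ge> 1\<close> by (intro unit_image_norms_nonempty[of j]) simp
    show "bdd_below (\<Union>j\<in>?windows. unit_image_norms I a {j .. j + int N - 1})"
      by (rule bdd_belowI[where m=0]) (auto intro: unit_image_norms_nonneg)
  qed
  also have "\<dots> = Inf {nu_J I a {j .. j + int N - 1} | j. {j .. j + int N - 1} \<subseteq> I}"
    unfolding nu_J_eq_Inf_unit_image_norms by (rule arg_cong[where f=Inf]) blast
  finally show ?thesis .
qed

lemma nu_J_windows_eq_nu_mat_C_N:
  assumes "band_operator I a w"
  shows "{nu_J I a {j .. j + int N - 1} | j. {j .. j + int N - 1} \<subseteq> I}
       = {nu_mat w N C | C. C \<in> C_N I a w N}"
proof -
  have "{nu_J I a {j .. j + int N - 1} | j. {j .. j + int N - 1} \<subseteq> I}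
      = {nu_J I a {k + 1 .. k + int N} | k. {k + 1 .. k + int N} \<subseteq> I}"
  proof (intro equalityI subsetI)
    fix v
    assume "v \<in> {nu_J I a {j .. j + int N - 1} | j. {j .. j + int N - 1} \<subseteq> I}"
    then obtain j where "v = nu_J I a {j .. j + int N - 1}" "{j .. j + int N - 1} \<subseteq> I"
      by blast
    then show "v \<in> {nu_J I a {k + 1 .. k + int N} | k. {k + 1 .. k + int N} \<subseteq> I}"
      by (intro CollectI exI[where x="j - 1"]) (simp add: algebra_simps)
  next
    fix v
    assume "v \<in> {nu_J I a {k + 1 .. k + int N} | k. {k + 1 .. k + int N} \<subseteq> I}"
    then obtain k where "v = nu_J I a {k + 1 .. k + int N}" "{k + 1 .. k + int N} \<subseteq> I"
      by blast
    then show "v \<in> {nu_J I a {j .. j + int N - 1} | j. {j .. j + int N - 1} \<subseteq> I}"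
      by (intro CollectI exI[where x="k + 1"]) (simp add: algebra_simps)
  qed
  also have "\<dots> = {nu_mat w N (cut_matrix I a w N k) | k. {k + 1 .. k + int N} \<subseteq> I}"
    using nu_J_window_eq_nu_mat[OF assms] by metis
  also have "\<dots> = {nu_mat w N C | C. C \<in> C_N I a w N}"
    by (auto simp: C_N_def)
  finally show ?thesis .
qed

theorem lemma4p1:
  fixes I :: "int set" and a :: "int \<Rightarrow> int \<Rightarrow> complex" and w N :: nat
  assumes "discrete_interval I"
    and "band_operator I a w"
    and "N \<ge> 1"
    and "\<exists>j. {j .. j + int N - 1} \<subseteq> I"
  shows "nu_N I a N = Inf {nu_J I a {j .. j + int N - 1} | j. {j .. j + int N - 1} \<subseteq> I}
       \<and> Inf {nu_J I a {j .. j + int N - 1} | j. {j .. j + int N - 1} \<subseteq> I}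
           = Inf {nu_mat w N C | C. C \<in> C_N I a w N}"
  using nu_N_eq_Inf_nu_J_windows[OF assms(1,3,4)] nu_J_windows_eq_nu_mat_C_N[OF assms(2)]
  by simp

end
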